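(* Let $k>1$ be a square-free natural number and let $\mathfrak{n}^{\mathbb{Q}}_k$ be the rational Lie algebra with basis $X_1,X_2,X_3,X_4,Z_1,Z_2$ and nonzero brackets (up to antisymmetry) $[X_1,X_3]=Z_1$, $[X_1,X_4]=Z_2$, $[X_2,X_3]=kZ_2$, $[X_2,X_4]=Z_1$. Then there exists an Anosov automorphism $f$ of $\mathfrak{n}^{\mathbb{Q}}_k$ with signature $\{2,4\}$.
   Context: An automorphism of a rational Lie algebra is Anosov if it is hyperbolic (no eigenvalue of absolute value $1$) and integer-like (characteristic polynomial with integer coefficients and determinant $\pm1$). The signature of such an automorphism is the set $\{p,q\}$ where $p$ is the number of eigenvalues (with multiplicity) of absolute value $<1$ and $q$ the number of absolute value $>1$. *)

theory Defs
  imports Complex_Main "Jordan_Normal_Form.Char_Poly" "HOL-Computational_Algebra.Squarefree"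
begin

text \<open>The rational Lie algebra n_k^Q, realised on rat vectors of dimension 6 with respect to the
 basis X1,X2,X3,X4,Z1,Z2 (indices 0,...,5).\<close>

definition nk_struct :: "nat \<Rightarrow> nat \<Rightarrow> nat \<Rightarrow> nat \<Rightarrow> rat" where
  "nk_struct k i j l =
     (if (i, j, l) = (0, 2, 4) then 1 else if (i, j, l) = (2, 0, 4) then -1
      else if (i, j, l) = (0, 3, 5) then 1 else if (i, j, l) = (3, 0, 5) then -1
      else if (i, j, l) = (1, 2, 5) then of_nat k else if (i, j, l) = (2, 1, 5) then - of_nat k
      else if (i, j, l) = (1, 3, 4) then 1 else if (i, j, l) = (3, 1, 4) then -1
      else 0)"

definition nk_bracket :: "nat \<Rightarrow> rat vec \<Rightarrow> rat vec \<Rightarrow> rat vec" where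
  "nk_bracket k x y = vec 6 (\<lambda>l. \<Sum>i<6. \<Sum>j<6. x $ i * y $ j * nk_struct k i j l)"

definition nk_automorphism :: "nat \<Rightarrow> rat mat \<Rightarrow> bool" where
  "nk_automorphism k A \<longleftrightarrow> A \<in> carrier_mat 6 6 \<and> det A \<noteq> 0 \<and>
     (\<forall>x \<in> carrier_vec 6. \<forall>y \<in> carrier_vec 6.
        A *\<^sub>v nk_bracket k x y = nk_bracket k (A *\<^sub>v x) (A *\<^sub>v y))"

definition cmat :: "rat mat \<Rightarrow> complex mat" where
  "cmat A = map_mat of_rat A"

definition hyperbolic :: "rat mat \<Rightarrow> bool" where
  "hyperbolic A \<longleftrightarrow> (\<forall>z. eigenvalue (cmat A) z \<longrightarrow> cmod z \<noteq> 1)"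

definition integer_like :: "rat mat \<Rightarrow> bool" where
  "integer_like A \<longleftrightarrow> (\<forall>i. coeff (char_poly A) i \<in> \<int>) \<and> (det A = 1 \<or> det A = -1)"

definition anosov :: "rat mat \<Rightarrow> bool" where
  "anosov A \<longleftrightarrow> hyperbolic A \<and> integer_like A"

definition num_eig_lt1 :: "rat mat \<Rightarrow> nat" where
  "num_eig_lt1 A = (\<Sum>z \<in> {z. eigenvalue (cmat A) z \<and> cmod z < 1}. order z (char_poly (cmat A)))"

definition num_eig_gt1 :: "rat mat \<Rightarrow> nat" where
  "num_eig_gt1 A = (\<Sum>z \<in> {z. eigenvalue (cmat A) z \<and> cmod z > 1}. order z (char_poly (cmat A)))"

definition signature :: "rat mat \<Rightarrow> nat set" where
  "signature A = {num_eig_lt1 A, num_eig_gt1 A}"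

end

theory Submission
  imports Defs "HOL-Analysis.Kronecker_Approximation_Theorem" "HOL-Computational_Algebra.Nth_Powers"
begin

(* Since k is not a square, Pell's equation a^2 - k b^2 = 1 has a solution with a, b > 0: Dirichlet
   approximation of sqrt k yields infinitely many pairs of bounded norm, and two of them that are
   congruent modulo their common norm N divide to a unit. Put e = a + b sqrt k and s = 1/e = a - b sqrt k.
   The integer matrix nk_matrix k a b is an automorphism of determinant (a^2 - k b^2)^2 = 1 whose
   characteristic polynomial factors over C as (x^2 - e x + s) (x^2 - s x + e) (x - e) (x - s).
   The first quadratic is negative at 1, so it has one root in (0, 1) and one above 1; the second has
   a pair of conjugate roots of modulus sqrt e > 1. Hence two eigenvalues lie inside the unit circle
   and four outside. *)

lemma squarefree_not_square:
  fixes k :: nat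
  assumes "k > 1" and "squarefree k"
  shows "\<not> is_nth_power 2 k"
proof
  assume "is_nth_power 2 k"
  then obtain y where y: "k = y^2" by (elim is_nth_powerE)
  then have "y dvd 1" using squarefreeD[OF assms(2)] by simp
  with y assms(1) show False by simp
qed

lemma nonsquare_mult_square_neq:
  fixes k :: nat and p q :: int
  assumes "\<not> is_nth_power 2 k" and "q \<noteq> 0"
  shows "p^2 \<noteq> int k * q^2"
proof
  assume "p^2 = int k * q^2"
  then have "int (nat \<bar>p\<bar> ^ 2) = int (k * nat \<bar>q\<bar> ^ 2)" by simp
  then have "is_nth_power 2 (k * nat \<bar>q\<bar> ^ 2)" by (metis of_nat_eq_iff is_nth_power_nth_power)
  with assms show False using is_nth_power_mult_cancel_right[of 2 "nat \<bar>q\<bar> ^ 2" k] by auto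
qed

lemma Dirichlet_approx_norm_bound:
  fixes s :: real and N :: nat
  assumes "s \<ge> 1" and "N > 0"
  obtains p q :: int where "p > 0" "q > 0" "\<bar>q * s - p\<bar> < 1 / N"
    "\<bar>p^2 - q^2 * s^2\<bar> \<le> 2 * s + 1"
proof -
  obtain p q :: int where pq: "0 < q" "q \<le> int N" "\<bar>q * s - p\<bar> < 1 / N"
    using Dirichlet_approx[OF assms(2)] by blast
  have N1: "1 / real N \<le> 1" using assms(2) by simp
  have qs: "q * s \<ge> s" using pq(1) assms(1) by simp
  have p_near: "\<bar>p - q * s\<bar> < 1" using pq(3) N1 by linarith
  then have "p > 0" using qs assms(1) by linarith
  have "\<bar>p^2 - q^2 * s^2\<bar> = \<bar>q * s - p\<bar> * \<bar>p + q * s\<bar>"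
    by (simp add: power2_eq_square algebra_simps flip: abs_mult)
  also have "\<dots> \<le> (1 / N) * (2 * q * s + 1)"
  proof (rule mult_mono)
    show "\<bar>p + q * s\<bar> \<le> 2 * q * s + 1"
      using p_near qs assms(1) unfolding abs_less_iff abs_le_iff by linarith
  qed (use pq(3) in auto)
  also have "\<dots> = 2 * s * (q / N) + 1 / N" by (simp add: field_simps add_divide_distrib)
  also have "\<dots> \<le> 2 * s + 1"
  proof -
    have "q / N \<le> 1" using pq(2) assms(2) by (simp add: field_simps)
    then show ?thesis using assms(1) N1 by (smt (verit) mult_left_le)
  qed
  finally show ?thesis using that \<open>p > 0\<close> pq(1,3) by blast
qed

lemma infinite_pairs_bounded_norm:
  fixes k :: nat
  assumes nonsq: "\<not> is_nth_power 2 k"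
  shows "infinite {(p :: int, q :: int). p > 0 \<and> q > 0 \<and> \<bar>p^2 - int k * q^2\<bar> \<le> 2 * sqrt k + 1}"
    (is "infinite ?S")
proof
  assume fin: "finite ?S"
  define s where "s = sqrt k"
  have "k \<noteq> 0" using nonsq by (intro notI) simp
  then have s1: "s \<ge> 1" and s2: "s^2 = k" unfolding s_def by simp_all
  have gap: "\<bar>q * s - p\<bar> > 0" if "q \<noteq> 0" for p q :: int
  proof -
    have "p \<noteq> q * s"
    proof
      assume "p = q * s"
      then have "real_of_int (p^2) = real_of_int (int k * q^2)" by (simp add: power_mult_distrib s2)
      with nonsquare_mult_square_neq[OF nonsq that] show False by (simp only: of_int_eq_iff)
    qed
    then show ?thesis by simp
  qed
  define \<delta> where "\<delta> = Min (insert 1 ((\<lambda>(p, q). \<bar>q * s - p\<bar>) ` ?S))"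
  have "\<delta> > 0" unfolding \<delta>_def using fin gap by auto
  then obtain N :: nat where N: "1 / \<delta> < N" using reals_Archimedean2 by blast
  with \<open>\<delta> > 0\<close> have "1 < \<delta> * N" by (simp add: field_simps)
  then have "N > 0" by (cases "N = 0") auto
  with \<open>1 < \<delta> * N\<close> have "1 / N < \<delta>" by (simp add: field_simps)
  obtain p q :: int where pq: "p > 0" "q > 0" "\<bar>q * s - p\<bar> < 1 / N"
    "\<bar>p^2 - q^2 * s^2\<bar> \<le> 2 * s + 1"
    using Dirichlet_approx_norm_bound[OF s1 \<open>N > 0\<close>] by blast
  then have "(p, q) \<in> ?S" by (simp add: s2 s_def mult.commute)
  then have "\<delta> \<le> \<bar>q * s - p\<bar>" unfolding \<delta>_def using fin by (intro Min_le) auto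
  with pq(3) \<open>1 / N < \<delta>\<close> show False by linarith
qed

lemma pell_solution_from_congruent_pair:
  fixes k :: nat and p1 q1 p2 q2 N :: int
  assumes N1: "p1^2 - int k * q1^2 = N" and N2: "p2^2 - int k * q2^2 = N" and "N \<noteq> 0"
    and modp: "p1 mod N = p2 mod N" and modq: "q1 mod N = q2 mod N"
    and "q1 > 0" "q2 > 0" and "(p1, q1) \<noteq> (p2, q2)"
  shows "\<exists>x y. x^2 - int k * y^2 = 1 \<and> y \<noteq> 0"
proof -
  \<comment> \<open>(X, Y) is the product of (p1, q1) with the conjugate of (p2, q2); modulo N it agrees with
    the product of (p1, q1) with its own conjugate, which is (N, 0).\<close>
  define X where "X = p1 * p2 - int k * q1 * q2"
  define Y where "Y = p1 * q2 - q1 * p2"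
  have "X^2 - int k * Y^2 = (p1^2 - int k * q1^2) * (p2^2 - int k * q2^2)"
    unfolding X_def Y_def by (simp add: power2_eq_square algebra_simps)
  then have brahmagupta: "X^2 - int k * Y^2 = N * N" using N1 N2 by simp
  have dp: "N dvd p2 - p1" and dq: "N dvd q2 - q1" using modp modq by (metis mod_eq_dvd_iff)+
  have "X = N + p1 * (p2 - p1) - int k * q1 * (q2 - q1)"
    unfolding X_def N1[symmetric] by (simp add: algebra_simps power2_eq_square)
  then obtain x where x: "X = N * x" using dp dq by (metis dvd_add dvd_diff dvd_mult dvd_refl dvdE)
  have "Y = p1 * (q2 - q1) - q1 * (p2 - p1)" unfolding Y_def by (simp add: algebra_simps)
  then obtain y where y: "Y = N * y" using dp dq by (metis dvd_diff dvd_mult dvdE)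
  have "N * N * (x^2 - int k * y^2) = N * N * 1"
    using brahmagupta unfolding x y by (simp add: power2_eq_square algebra_simps)
  then have "x^2 - int k * y^2 = 1" using \<open>N \<noteq> 0\<close> by simp
  moreover have "y \<noteq> 0"
  proof
    assume "y = 0"
    then have Y0: "p1 * q2 = q1 * p2" using y unfolding Y_def by simp
    have "q2^2 * N = (p1 * q2)^2 - int k * q1^2 * q2^2"
      unfolding N1[symmetric] by (simp add: power2_eq_square algebra_simps)
    also have "\<dots> = q1^2 * N"
      unfolding Y0 N2[symmetric] by (simp add: power2_eq_square algebra_simps)
    finally have "q2 = q1" using \<open>N \<noteq> 0\<close> \<open>q1 > 0\<close> \<open>q2 > 0\<close> by (simp add: power2_eq_iff)
    with Y0 \<open>q1 > 0\<close> \<open>(p1, q1) \<noteq> (p2, q2)\<close> show False by simp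
  qed
  ultimately show ?thesis by blast
qed

lemma congruent_pairs_same_norm:
  fixes k :: nat
  assumes nonsq: "\<not> is_nth_power 2 k"
  obtains p1 q1 p2 q2 N :: int where "p1^2 - int k * q1^2 = N" "p2^2 - int k * q2^2 = N" "N \<noteq> 0"
    "p1 mod N = p2 mod N" "q1 mod N = q2 mod N" "q1 > 0" "q2 > 0" "(p1, q1) \<noteq> (p2, q2)"
proof -
  define S where "S = {(p :: int, q :: int). p > 0 \<and> q > 0 \<and> \<bar>p^2 - int k * q^2\<bar> \<le> 2 * sqrt k + 1}"
  define M where "M = \<lceil>2 * sqrt k + 1\<rceil>"
  define \<nu> where "\<nu> = (\<lambda>(p :: int, q :: int). p^2 - int k * q^2)"
  define f where "f = (\<lambda>pq. (\<nu> pq, fst pq mod \<nu> pq, snd pq mod \<nu> pq))"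
  have \<nu>_nz: "\<nu> (p, q) \<noteq> 0" if "q \<noteq> 0" for p q
    using nonsquare_mult_square_neq[OF nonsq that] unfolding \<nu>_def by simp
  have "f pq \<in> {-M..M} \<times> {-M..M} \<times> {-M..M}" if "pq \<in> S" for pq
  proof -
    obtain p q where pq: "pq = (p, q)" by fastforce
    from that[unfolded pq] have "real_of_int \<bar>\<nu> (p, q)\<bar> \<le> 2 * sqrt k + 1" and "q \<noteq> 0"
      unfolding S_def \<nu>_def by auto
    then have "real_of_int \<bar>\<nu> (p, q)\<bar> \<le> real_of_int M"
      unfolding M_def using le_of_int_ceiling order_trans by blast
    then have bound: "\<bar>\<nu> (p, q)\<bar> \<le> M" by (simp only: of_int_le_iff)
    have "\<bar>p mod \<nu> (p, q)\<bar> \<le> M" "\<bar>q mod \<nu> (p, q)\<bar> \<le> M"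
      using abs_mod_less[OF \<nu>_nz[OF \<open>q \<noteq> 0\<close>]] bound by (meson less_imp_le order_trans)+
    with bound show ?thesis unfolding f_def pq by (simp add: abs_le_iff)
  qed
  then have "f ` S \<subseteq> {-M..M} \<times> {-M..M} \<times> {-M..M}" by blast
  then have "finite (f ` S)" by (rule finite_subset) simp
  with infinite_pairs_bounded_norm[OF nonsq] have "\<not> inj_on f S"
    unfolding S_def using finite_imageD by blast
  then obtain p1 q1 p2 q2 where P: "(p1, q1) \<in> S" "(p2, q2) \<in> S" "(p1, q1) \<noteq> (p2, q2)"
    "f (p1, q1) = f (p2, q2)"
    unfolding inj_on_def by auto
  from P(4) have same_norm: "\<nu> (p2, q2) = \<nu> (p1, q1)" unfolding f_def by simp
  with P(4) have congr: "p1 mod \<nu> (p1, q1) = p2 mod \<nu> (p1, q1)"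
    "q1 mod \<nu> (p1, q1) = q2 mod \<nu> (p1, q1)"
    unfolding f_def by simp_all
  have pos: "q1 > 0" "q2 > 0" using P(1,2) unfolding S_def by simp_all
  then have "\<nu> (p1, q1) \<noteq> 0" using \<nu>_nz by simp
  with same_norm congr pos P(3) show ?thesis
    using that[of p1 q1 "\<nu> (p1, q1)" p2 q2] by (simp add: \<nu>_def)
qed

lemma pell_equation_solvable:
  fixes k :: nat
  assumes "\<not> is_nth_power 2 k"
  shows "\<exists>a b :: int. a > 0 \<and> b > 0 \<and> a^2 - int k * b^2 = 1"
proof -
  obtain p1 q1 p2 q2 N :: int where "p1^2 - int k * q1^2 = N" "p2^2 - int k * q2^2 = N" "N \<noteq> 0"
    "p1 mod N = p2 mod N" "q1 mod N = q2 mod N" "q1 > 0" "q2 > 0" "(p1, q1) \<noteq> (p2, q2)"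
    using congruent_pairs_same_norm[OF assms] .
  from pell_solution_from_congruent_pair[OF this] obtain x y
    where xy: "x^2 - int k * y^2 = 1" "y \<noteq> 0" by blast
  moreover have "x \<noteq> 0"
  proof
    assume "x = 0"
    with xy(1) have "int k * y^2 = -1" by simp
    moreover have "int k * y^2 \<ge> 0" by simp
    ultimately show False by linarith
  qed
  ultimately show ?thesis by (intro exI[of _ "\<bar>x\<bar>"] exI[of _ "\<bar>y\<bar>"]) simp
qed

(* The test on f (0, j) lets the simplifier skip zero entries, which keeps the expansions of
   6 x 6 determinants below small. *)
lemma det_mat_Suc:
  fixes f :: "nat \<times> nat \<Rightarrow> 'a :: comm_ring_1"
  shows "det (Matrix.mat (Suc n) (Suc n) f) =
    (\<Sum>j<Suc n. if f (0, j) = 0 then 0 else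
        (-1)^j * f (0, j) * det (Matrix.mat n n (\<lambda>(i, j'). f (Suc i, if j' < j then j' else Suc j'))))"
    (is "_ = (\<Sum>j<Suc n. ?t j)")
proof -
  let ?A = "Matrix.mat (Suc n) (Suc n) f"
  have "det ?A = (\<Sum>j<Suc n. ?A $$ (0, j) * cofactor ?A 0 j)"
    by (rule laplace_expansion_row) auto
  also have "\<dots> = (\<Sum>j<Suc n. ?t j)"
  proof (rule sum.cong[OF refl])
    fix j assume "j \<in> {..<Suc n}"
    moreover have "mat_delete ?A 0 j = Matrix.mat n n (\<lambda>(i, j'). f (Suc i, if j' < j then j' else Suc j'))"
      unfolding mat_delete_def by (rule eq_matI) auto
    ultimately show "?A $$ (0, j) * cofactor ?A 0 j = ?t j" unfolding cofactor_def by auto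
  qed
  finally show ?thesis .
qed

lemma sum_lessThan_numeral: "(\<Sum>j<numeral m. f j) = (\<Sum>j<pred_numeral m. f j) + f (pred_numeral m)"
  by (simp only: numeral_eq_Suc sum.lessThan_Suc)

lemma sum_atLeast0_numeral: "(\<Sum>j\<in>{0..<numeral m}. f j) = (\<Sum>j<pred_numeral m. f j) + f (pred_numeral m)"
  by (simp only: atLeast0LessThan sum_lessThan_numeral)

lemmas det_mat_numeral = det_mat_Suc[of "pred_numeral m" for m, folded numeral_eq_Suc]

lemmas det_mat_expand =
  det_mat_numeral det_mat_Suc[of 0] sum_lessThan_numeral pred_numeral_simps

lemma char_poly_matrix_mat:
  "char_poly_matrix (Matrix.mat n n f) = Matrix.mat n n (\<lambda>(i, j). (if i = j then [:0, 1:] else 0) + [:- f (i, j):])"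
  unfolding char_poly_matrix_def by (rule eq_matI) auto

(* Column j is the image of the j-th basis vector X1, X2, X3, X4, Z1, Z2. On the centre
   span(Z1, Z2) the map is multiplication by a + b sqrt k in the basis (sqrt k, 1). *)
definition nk_matrix :: "'a :: comm_ring_1 \<Rightarrow> 'a \<Rightarrow> 'a \<Rightarrow> 'a mat" where
  "nk_matrix k a b = Matrix.mat 6 6 (\<lambda>(i, j).
     [[0, 0, -(k*b), -a, 0, 0],
      [0, 0,   -a,   -b, 0, 0],
      [0, 1,    a,   -b, 0, 0],
      [1, 0, -(k*b),  a, 0, 0],
      [0, 0,    0,    0, a, b],
      [0, 0,    0,    0, k*b, a]] ! i ! j)"

lemma nk_matrix_carrier: "nk_matrix k a b \<in> carrier_mat 6 6"
  by (simp add: nk_matrix_def)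

lemma (in comm_ring_hom) map_mat_nk_matrix:
  "map_mat hom (nk_matrix k a b) = nk_matrix (hom k) (hom a) (hom b)"
proof (rule eq_matI)
  fix i j assume "i < dim_row (nk_matrix (hom k) (hom a) (hom b))" "j < dim_col (nk_matrix (hom k) (hom a) (hom b))"
  then have "i < 6" "j < 6" by (simp_all add: nk_matrix_def)
  then show "map_mat hom (nk_matrix k a b) $$ (i, j) = nk_matrix (hom k) (hom a) (hom b) $$ (i, j)"
    by (auto simp: nk_matrix_def less_Suc_eq numeral_eq_Suc hom_distribs)
qed (simp_all add: nk_matrix_def)

lemma det_nk_matrix:
  fixes k a b :: "'a :: idom"
  assumes "k \<noteq> 0" "a \<noteq> 0" "b \<noteq> 0"
  shows "det (nk_matrix k a b) = (a^2 - k * b^2)^2"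
  unfolding nk_matrix_def using assms
  by (simp add: det_mat_expand) (simp add: algebra_simps power2_eq_square)

lemma char_poly_nk_matrix:
  fixes k a b :: "'a :: idom"
  assumes "k \<noteq> 0" "a \<noteq> 0" "b \<noteq> 0"
  shows "char_poly (nk_matrix k a b) =
    ([:a, -a, 1:]^2 - [:k * b^2:] * [:1, 1:]^2) * ([:-a, 1:]^2 - [:k * b^2:])"
  unfolding char_poly_def nk_matrix_def char_poly_matrix_mat using assms
  by (simp add: det_mat_expand) (simp add: algebra_simps power2_eq_square)

lemma nk_matrix_bracket:
  fixes a b :: rat
  assumes "x \<in> carrier_vec 6" and "y \<in> carrier_vec 6"
  shows "nk_matrix (of_nat k) a b *\<^sub>v nk_bracket k x y =
    nk_bracket k (nk_matrix (of_nat k) a b *\<^sub>v x) (nk_matrix (of_nat k) a b *\<^sub>v y)"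
    (is "?A *\<^sub>v _ = _")
proof (rule eq_vecI)
  fix i assume "i < dim_vec (nk_bracket k (?A *\<^sub>v x) (?A *\<^sub>v y))"
  then have "i < 6" by (simp add: nk_bracket_def)
  with assms show "(?A *\<^sub>v nk_bracket k x y) $ i = nk_bracket k (?A *\<^sub>v x) (?A *\<^sub>v y) $ i"
    by (auto simp: less_Suc_eq numeral_eq_Suc nk_matrix_def nk_bracket_def mult_mat_vec_def
        scalar_prod_def sum_atLeast0_numeral sum_lessThan_numeral nk_struct_def algebra_simps)
qed (simp add: nk_matrix_def nk_bracket_def)

lemma order_prod_linear_factors: "order z (\<Prod>r\<leftarrow>rs. [:-r, 1:]) = count_list rs z"
proof (induction rs)
  case (Cons r rs)
  have "(\<Prod>r\<leftarrow>rs. [:-r, 1:]) \<noteq> 0" by (auto simp: prod_list_zero_iff)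
  then have "order z (\<Prod>r\<leftarrow>r # rs. [:-r, 1:]) = order z [:-r, 1:] + order z (\<Prod>r\<leftarrow>rs. [:-r, 1:])"
    by (simp only: list.map prod_list.Cons) (rule order_mult, simp del: mult_pCons_left)
  with Cons.IH show ?case by (simp add: order_linear')
qed (simp add: order_0I)

lemma poly_prod_linear_factors_eq_0:
  fixes z :: "'a :: idom"
  shows "poly (\<Prod>r\<leftarrow>rs. [:-r, 1:]) z = 0 \<longleftrightarrow> z \<in> set rs"
  by (induction rs) auto

lemma sum_count_list_filter:
  "(\<Sum>z\<in>{z \<in> set rs. P z}. count_list rs z) = length (filter P rs)"
proof -
  have "count_list rs z = count_list (filter P rs) z" if "P z" for z
    using that by (induction rs) auto
  then have "(\<Sum>z\<in>{z \<in> set rs. P z}. count_list rs z) = sum (count_list (filter P rs)) {z \<in> set rs. P z}"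
    by (intro sum.cong) auto
  also have "\<dots> = length (filter P rs)" by (rule sum_count_set) auto
  finally show ?thesis .
qed

lemma eigenvalue_cmat_iff:
  assumes "A \<in> carrier_mat n n" and "char_poly (cmat A) = (\<Prod>r\<leftarrow>rs. [:-r, 1:])"
  shows "eigenvalue (cmat A) z \<longleftrightarrow> z \<in> set rs"
proof -
  have "cmat A \<in> carrier_mat n n" using assms(1) by (simp add: cmat_def)
  then show ?thesis
    by (simp add: eigenvalue_root_char_poly assms(2) poly_prod_linear_factors_eq_0)
qed

lemma sum_order_eigenvalues_cmat:
  assumes "A \<in> carrier_mat n n" and cp: "char_poly (cmat A) = (\<Prod>r\<leftarrow>rs. [:-r, 1:])"
  shows "(\<Sum>z\<in>{z. eigenvalue (cmat A) z \<and> P z}. order z (char_poly (cmat A))) = length (filter P rs)"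
proof -
  have "{z. eigenvalue (cmat A) z \<and> P z} = {z \<in> set rs. P z}"
    using eigenvalue_cmat_iff[OF assms] by auto
  then have "(\<Sum>z\<in>{z. eigenvalue (cmat A) z \<and> P z}. order z (char_poly (cmat A))) =
      (\<Sum>z\<in>{z \<in> set rs. P z}. count_list rs z)"
    unfolding cp order_prod_linear_factors by simp
  then show ?thesis unfolding sum_count_list_filter .
qed

lemma integer_like_of_int_mat:
  fixes B :: "int mat"
  assumes "B \<in> carrier_mat n n" and "det B = 1 \<or> det B = -1"
  shows "integer_like (map_mat rat_of_int B)"
proof -
  have "char_poly (map_mat rat_of_int B) = map_poly of_int (char_poly B)"
    by (rule of_int_hom.char_poly_hom[OF assms(1)])
  then have "coeff (char_poly (map_mat rat_of_int B)) i \<in> \<int>" for i by (simp add: coeff_map_poly)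
  then show ?thesis using assms(2) unfolding integer_like_def by auto
qed

lemma quadratic_factor:
  fixes x y :: "'a :: comm_ring_1"
  assumes "x + y = t" and "x * y = c"
  shows "[:c, -t, 1:] = [:-x, 1:] * [:-y, 1:]"
  using assms by (auto simp: algebra_simps)

lemma real_quadratic_roots_around_1:
  fixes t c :: real
  assumes "0 < c" and "1 + c < t"
  obtains x y where "x + y = t" "x * y = c" "1 < x" "0 < y" "y < 1"
proof -
  define d where "d = sqrt (t^2 - 4 * c)"
  have "(1 + c)^2 - 4 * c = (1 - c)^2" by (simp add: power2_eq_square algebra_simps)
  then have "4 * c \<le> (1 + c)^2" by (smt (verit) zero_le_power2)
  also have "\<dots> < t^2" using assms by (intro power_strict_mono) auto
  finally have d: "d^2 = t^2 - 4 * c" "d \<ge> 0" unfolding d_def by simp_all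
  define x y where "x = (t + d) / 2" and "y = (t - d) / 2"
  have sum: "x + y = t" and prod: "x * y = c"
    unfolding x_def y_def using d(1) by (simp_all add: field_simps power2_eq_square)
  \<comment> \<open>The quadratic is negative at 1, so 1 separates its roots.\<close>
  have "(1 - x) * (1 - y) < 0" using sum prod assms(2) by (simp add: algebra_simps)
  moreover have "y \<le> x" unfolding x_def y_def using d(2) by simp
  ultimately have "y < 1" "1 < x" by (auto simp: mult_less_0_iff)
  moreover have "0 < y" using prod \<open>1 < x\<close> assms(1) by (simp add: zero_less_mult_iff flip: prod)
  ultimately show ?thesis using that sum prod by blast
qed

lemma complex_quadratic_roots:
  fixes t c :: real
  assumes "t^2 \<le> 4 * c"
  obtains z :: complex where "z + cnj z = t" "z * cnj z = c" "cmod z = sqrt c"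
proof
  define z where "z = Complex (t / 2) (sqrt (4 * c - t^2) / 2)"
  have norm: "Re z ^ 2 + Im z ^ 2 = c" unfolding z_def using assms by (simp add: power_divide field_simps)
  show "z + cnj z = t" unfolding z_def by (simp add: complex_eq_iff)
  show "z * cnj z = c" using norm by (simp add: complex_mult_cnj)
  show "cmod z = sqrt c" unfolding cmod_def norm ..
qed

lemma nk_char_poly_split:
  fixes a d e s :: "'a :: field_char_0"
  assumes "e + s = 2 * a" and "e * s = a^2 - d"
  shows "([:a, -a, 1:]^2 - [:d:] * [:1, 1:]^2) * ([:-a, 1:]^2 - [:d:]) =
    [:s, -e, 1:] * [:e, -s, 1:] * ([:-e, 1:] * [:-s, 1:])"
proof -
  have a: "a = (e + s) / 2" and d: "d = ((e + s) / 2)^2 - e * s" using assms by (simp_all add: field_simps)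
  have "[:a, -a, 1:]^2 - [:d:] * [:1, 1:]^2 = [:s, -e, 1:] * [:e, -s, 1:]"
    unfolding a d by (simp add: power2_eq_square field_simps)
  moreover have "[:-a, 1:]^2 - [:d:] = [:-e, 1:] * [:-s, 1:]"
    using assms by (simp add: power2_eq_square algebra_simps)
  ultimately show ?thesis by simp
qed

lemma pell_unit_bounds:
  fixes k :: nat and a b :: int
  assumes "k > 1" and "a > 0" and "b > 0" and pell: "a^2 - int k * b^2 = 1"
  shows "a + b * sqrt k > 2" and "(a + b * sqrt k) * (a - b * sqrt k) = 1"
proof -
  have "1 < sqrt k" using assms(1) by simp
  also have "sqrt k \<le> b * sqrt k" using assms(3) mult_right_mono[of 1 "real_of_int b" "sqrt k"] by simp
  finally show "a + b * sqrt k > 2" using assms(2) by linarith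
  have "(a + b * sqrt k) * (a - b * sqrt k) = a^2 - k * b^2" by (simp add: algebra_simps power2_eq_square)
  also have "\<dots> = 1" using arg_cong[OF pell, of real_of_int] by simp
  finally show "(a + b * sqrt k) * (a - b * sqrt k) = 1" .
qed

lemma nk_matrix_spectrum:
  fixes k :: nat and a b :: int
  assumes "k > 1" and "a > 0" and "b > 0" and pell: "a^2 - int k * b^2 = 1"
  obtains rs :: "complex list" where
    "char_poly (nk_matrix (of_nat k) (of_int a) (of_int b)) = (\<Prod>r\<leftarrow>rs. [:-r, 1:])"
    "\<forall>z \<in> set rs. cmod z \<noteq> 1"
    "length (filter (\<lambda>z. cmod z < 1) rs) = 2"
    "length (filter (\<lambda>z. cmod z > 1) rs) = 4"
proof -
  define e \<sigma> :: real where "e = a + b * sqrt k" and "\<sigma> = a - b * sqrt k"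
  have "e > 2" and e\<sigma>: "e * \<sigma> = 1" unfolding e_def \<sigma>_def by (fact pell_unit_bounds[OF assms])+
  then have "\<sigma> = 1 / e" by (simp add: field_simps)
  with \<open>e > 2\<close> have "0 < \<sigma>" "\<sigma> < 1" by simp_all
  obtain x y where xy: "x + y = e" "x * y = \<sigma>" "1 < x" "0 < y" "y < 1"
    using real_quadratic_roots_around_1[of \<sigma> e] \<open>0 < \<sigma>\<close> \<open>\<sigma> < 1\<close> \<open>e > 2\<close> by auto
  obtain w where w: "w + cnj w = \<sigma>" "w * cnj w = e" "cmod w = sqrt e"
    using complex_quadratic_roots[of \<sigma> e] \<open>0 < \<sigma>\<close> \<open>\<sigma> < 1\<close> \<open>e > 2\<close>
    by (smt (verit) power_le_one)
  define rs where "rs = [of_real x, of_real y, w, cnj w, of_real e, of_real \<sigma> :: complex]"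
  have e_plus_\<sigma>: "e + \<sigma> = 2 * a" unfolding e_def \<sigma>_def by simp
  have "(of_real e + of_real \<sigma> :: complex) = 2 * of_int a"
    "(of_real e * of_real \<sigma> :: complex) = of_int a ^ 2 - of_nat k * of_int b ^ 2"
    using arg_cong[OF e_plus_\<sigma>, of complex_of_real] arg_cong[OF e\<sigma>, of complex_of_real]
      arg_cong[OF pell, of complex_of_int]
    by simp_all
  note split = nk_char_poly_split[OF this]
  have "char_poly (nk_matrix (of_nat k) (of_int a) (of_int b) :: complex mat) =
      [:of_real \<sigma>, -of_real e, 1:] * [:of_real e, -of_real \<sigma>, 1:] *
      ([:-of_real e, 1:] * [:-of_real \<sigma>, 1:])"
    using assms(1-3) by (intro trans[OF char_poly_nk_matrix split]) simp_all
  also have "[:of_real \<sigma>, -of_real e, 1:] = [:-of_real x, 1:] * [:-of_real y :: complex, 1:]"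
    by (rule quadratic_factor) (use xy in \<open>simp_all flip: of_real_add of_real_mult\<close>)
  also have "[:of_real e, -of_real \<sigma> :: complex, 1:] = [:-w, 1:] * [:-cnj w, 1:]"
    by (rule quadratic_factor) (use w in simp_all)
  also have "[:-of_real x, 1:] * [:-of_real y, 1:] * ([:-w, 1:] * [:-cnj w, 1:]) *
      ([:-of_real e, 1:] * [:-of_real \<sigma>, 1:]) = (\<Prod>r\<leftarrow>rs. [:-r, 1:])"
    unfolding rs_def by (simp only: list.map prod_list.Cons prod_list.Nil mult_1_right mult.assoc)
  finally have "char_poly (nk_matrix (of_nat k) (of_int a) (of_int b)) = (\<Prod>r\<leftarrow>rs. [:-r, 1:])" .
  moreover have "cmod w > 1" using w(3) \<open>e > 2\<close> by simp
  then have "\<forall>z \<in> set rs. cmod z \<noteq> 1" "length (filter (\<lambda>z. cmod z < 1) rs) = 2"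
    "length (filter (\<lambda>z. cmod z > 1) rs) = 4"
    unfolding rs_def using xy \<open>e > 2\<close> \<open>0 < \<sigma>\<close> \<open>\<sigma> < 1\<close> by auto
  ultimately show ?thesis using that by blast
qed

theorem proposition3p2:
  fixes k :: nat
  assumes "k > 1" and "squarefree k"
  shows "\<exists>A. nk_automorphism k A \<and> anosov A \<and> signature A = {2, 4}"
proof -
  obtain a b :: int where ab: "a > 0" "b > 0" and pell: "a^2 - int k * b^2 = 1"
    using pell_equation_solvable[OF squarefree_not_square[OF assms]] by blast
  define A where "A = map_mat rat_of_int (nk_matrix (int k) a b)"
  have A: "A \<in> carrier_mat 6 6" by (simp add: A_def nk_matrix_carrier)
  have "det (nk_matrix (int k) a b) = 1" using assms(1) ab pell by (simp add: det_nk_matrix)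
  then have "integer_like A" and "det A = 1"
    unfolding A_def using integer_like_of_int_mat[OF nk_matrix_carrier] by simp_all
  moreover have A_eq: "A = nk_matrix (of_nat k) (of_int a) (of_int b)"
    unfolding A_def of_int_hom.map_mat_nk_matrix by simp
  ultimately have "nk_automorphism k A"
    unfolding nk_automorphism_def using A nk_matrix_bracket by simp
  have "cmat A = nk_matrix (of_nat k) (of_int a) (of_int b)"
    unfolding cmat_def A_eq of_rat_hom.map_mat_nk_matrix by simp
  then obtain rs where cp: "char_poly (cmat A) = (\<Prod>r\<leftarrow>rs. [:-r, 1:])"
    and "\<forall>z \<in> set rs. cmod z \<noteq> 1" "length (filter (\<lambda>z. cmod z < 1) rs) = 2"
    "length (filter (\<lambda>z. cmod z > 1) rs) = 4"
    using nk_matrix_spectrum[OF assms(1) ab pell] by metis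
  then have "hyperbolic A" unfolding hyperbolic_def eigenvalue_cmat_iff[OF A cp] by blast
  have "num_eig_lt1 A = 2" "num_eig_gt1 A = 4"
    unfolding num_eig_lt1_def num_eig_gt1_def sum_order_eigenvalues_cmat[OF A cp] by fact+
  with \<open>nk_automorphism k A\<close> \<open>integer_like A\<close> \<open>hyperbolic A\<close> show ?thesis
    unfolding anosov_def signature_def by auto
qed

end
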